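(* Let $A$ be a C*-algebra, $K$ an arbitrary set, and $\tau_g:A\to A$ a $*$-homomorphism for each $g\in K$. Assume that $A$ is generated (as a C*-algebra, i.e. $p(\mathfrak{V})$ is dense in $A$) by a subset $\mathfrak{V}\subset A$ for which $\tau_g(\mathfrak{V})\subset p(\mathfrak{V})$ for every $g\in K$. Also assume that $\{\tau_g(a):g\in K\}$ is totally bounded in $A$ (in norm) for every $a\in\mathfrak{V}$. Then $\{\tau_g(a):g\in K\}$ is totally bounded in $A$ for every $a\in A$.
   Context: For $\mathfrak{V}\subset A$, $p(\mathfrak{V})$ denotes the set of all finite complex linear combinations of finite products of elements of $\mathfrak{V}\cup\mathfrak{V}^*$, where $\mathfrak{V}^*=\{a^*:a\in\mathfrak{V}\}$. A set $B$ is totally bounded if for every $\varepsilon>0$ there is a finite set $F$ such that every element of $B$ is within distance $\varepsilon$ of some element of $F$. *)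

theory Defs
  imports "HOL-Analysis.Analysis"
begin

text \<open>C*-algebras (not necessarily unital): complete normed complex algebras with an
  involution satisfying the C*-identity.\<close>

class cstar_algebra = real_normed_algebra + banach +
  fixes scaleC :: "complex \<Rightarrow> 'a \<Rightarrow> 'a"
    and cstar :: "'a \<Rightarrow> 'a"
  assumes scaleC_add_right: "scaleC c (x + y) = scaleC c x + scaleC c y"
    and scaleC_add_left: "scaleC (c + d) x = scaleC c x + scaleC d x"
    and scaleC_scaleC: "scaleC c (scaleC d x) = scaleC (c * d) x"
    and scaleC_one: "scaleC 1 x = x"
    and scaleR_scaleC: "scaleR r x = scaleC (complex_of_real r) x"
    and norm_scaleC: "norm (scaleC c x) = cmod c * norm x"
    and mult_scaleC_left: "scaleC c x * y = scaleC c (x * y)"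
    and mult_scaleC_right: "x * scaleC c y = scaleC c (x * y)"
    and cstar_cstar: "cstar (cstar x) = x"
    and cstar_add: "cstar (x + y) = cstar x + cstar y"
    and cstar_scaleC: "cstar (scaleC c x) = scaleC (cnj c) (cstar x)"
    and cstar_mult: "cstar (x * y) = cstar y * cstar x"
    and cstar_identity: "norm (cstar x * x) = norm x ^ 2"

definition star_hom :: "('a::cstar_algebra \<Rightarrow> 'a) \<Rightarrow> bool" where
  "star_hom f \<longleftrightarrow>
     (\<forall>x y. f (x + y) = f x + f y) \<and>
     (\<forall>c x. f (scaleC c x) = scaleC c (f x)) \<and>
     (\<forall>x y. f (x * y) = f x * f y) \<and>
     (\<forall>x. f (cstar x) = cstar (f x))"

fun nlprod :: "'a::times list \<Rightarrow> 'a" where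
  "nlprod [] = undefined"
| "nlprod [x] = x"
| "nlprod (x # y # xs) = x * nlprod (y # xs)"

definition monomials :: "'a::cstar_algebra set \<Rightarrow> 'a set" where
  "monomials V = {nlprod xs | xs. xs \<noteq> [] \<and> set xs \<subseteq> V \<union> cstar ` V}"

definition pset :: "'a::cstar_algebra set \<Rightarrow> 'a set" where
  "pset V = {\<Sum>m\<in>F. scaleC (c m) m | F c. finite F \<and> F \<subseteq> monomials V}"

end

theory Submission
  imports Defs
begin

text \<open>Every *-homomorphism \<open>\<tau>\<close> of a C*-algebra satisfies \<open>\<parallel>\<tau> a\<parallel> \<le> 2\<parallel>a\<parallel>\<close>. This needs no
  spectral theory: for self-adjoint \<open>h\<close> with \<open>\<parallel>h\<parallel> \<le> 1/2\<close> the contraction \<open>k \<mapsto> (h\<^sup>2 + k\<^sup>2)/2\<close>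
  has a fixed point \<open>k\<close> (morally \<open>1 - \<surd>(1 - h\<^sup>2)\<close>, which need not exist in a non-unital
  algebra), and the C*-identity for \<open>\<tau> h + i \<tau> k\<close> and \<open>\<tau> k + i \<tau> h\<close> bounds \<open>\<parallel>\<tau> h\<parallel>\<close> through
  \<open>\<tau> h\<^sup>2 + \<tau> k\<^sup>2 = 2 \<tau> k\<close>. Hence the maps \<open>\<tau> g\<close> are equi-Lipschitz, so the set of elements with
  totally bounded orbit is closed. Since the \<open>\<tau> g\<close> are *-homomorphisms and the algebra
  operations map (products of) totally bounded sets to totally bounded sets, this set is
  also a *-subalgebra. It contains \<open>V\<close>, hence the dense set \<open>p(V)\<close>, hence everything.\<close>

lemma scaleC_zero_left [simp]: "scaleC 0 (x::'a::cstar_algebra) = 0"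
  using scaleR_scaleC[of 0 x] by simp

lemma scaleC_minus_left: "scaleC (- c) (x::'a::cstar_algebra) = - scaleC c x"
  using scaleC_add_left[of "- c" c x] by (simp add: eq_neg_iff_add_eq_0)

lemma cstar_zero [simp]: "cstar (0::'a::cstar_algebra) = 0"
  using cstar_add[of "0::'a" 0] by simp

lemma cstar_scaleR: "cstar (r *\<^sub>R (x::'a::cstar_algebra)) = r *\<^sub>R cstar x"
  by (simp add: scaleR_scaleC cstar_scaleC)

lemma norm_le_norm_cstar: "norm (x::'a::cstar_algebra) \<le> norm (cstar x)"
proof (cases "x = 0")
  case False
  have "norm x ^ 2 \<le> norm (cstar x) * norm x"
    using cstar_identity[of x] norm_mult_ineq[of "cstar x" x] by simp
  then show ?thesis
    using False by (simp add: power2_eq_square)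
qed simp

lemma norm_cstar [simp]: "norm (cstar (x::'a::cstar_algebra)) = norm x"
  using norm_le_norm_cstar[of x] norm_le_norm_cstar[of "cstar x"] by (simp add: cstar_cstar)

lemma bounded_linear_cstar: "bounded_linear (cstar :: 'a::cstar_algebra \<Rightarrow> 'a)"
  by (rule bounded_linear_intro[where K=1]) (auto simp: cstar_add cstar_scaleR)

lemma bounded_linear_scaleC: "bounded_linear (scaleC c :: 'a::cstar_algebra \<Rightarrow> 'a)"
  by (rule bounded_linear_intro[where K="cmod c"])
    (auto simp: scaleC_add_right scaleR_scaleC scaleC_scaleC norm_scaleC mult.commute)

lemma star_hom_zero: "star_hom f \<Longrightarrow> f 0 = 0"
  unfolding star_hom_def by (metis add_cancel_left_left add_0)

lemma star_hom_diff: "star_hom f \<Longrightarrow> f (x - y) = f x - f y"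
  unfolding star_hom_def by (metis eq_diff_eq)

lemma star_hom_scaleR: "star_hom f \<Longrightarrow> f (r *\<^sub>R x) = r *\<^sub>R f x"
  unfolding star_hom_def by (simp add: scaleR_scaleC)

text \<open>Apply the C*-identity to \<open>s + i m\<close>, whose real part is \<open>s\<close>.\<close>

lemma norm_power2_le_norm_sum_squares:
  fixes s m :: "'a::cstar_algebra"
  assumes "cstar s = s" "cstar m = m" "s * m = m * s"
  shows "norm s ^ 2 \<le> norm (s * s + m * m)"
proof -
  define z where "z = s + scaleC \<i> m"
  have cstar_z: "cstar z = s - scaleC \<i> m"
    using assms by (simp add: z_def cstar_add cstar_scaleC scaleC_minus_left)
  have "cstar z * z = s * s + s * scaleC \<i> m - scaleC \<i> m * s - scaleC \<i> m * scaleC \<i> m"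
    unfolding cstar_z by (simp add: z_def algebra_simps)
  also have "\<dots> = s * s + m * m"
    using assms(3) by (simp add: mult_scaleC_left mult_scaleC_right scaleC_scaleC
        scaleC_minus_left[symmetric] scaleC_one)
  finally have norm_z: "norm z ^ 2 = norm (s * s + m * m)"
    using cstar_identity[of z] by simp
  have "2 *\<^sub>R s = z + cstar z"
    unfolding cstar_z by (simp add: z_def scaleR_2)
  then have "2 * norm s \<le> norm z + norm (cstar z)"
    by (metis norm_scaleR norm_triangle_ineq abs_numeral)
  then have "norm s \<le> norm z"
    by simp
  then show ?thesis
    using norm_z by (metis norm_ge_zero power_mono)
qed

lemma norm_half_sum_squares_le:
  fixes h k :: "'a::real_normed_algebra"
  assumes "norm h \<le> 1/2" "norm k \<le> 1/2"
  shows "norm ((1/2::real) *\<^sub>R (h * h + k * k)) \<le> 1/2"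
proof -
  have square: "norm (x * x) \<le> 1/4" if "norm x \<le> 1/2" for x :: 'a
    using norm_mult_ineq[of x x] mult_mono[OF that that] by simp
  show ?thesis
    using square[OF assms(1)] square[OF assms(2)] norm_triangle_ineq[of "h * h" "k * k"] by simp
qed

lemma dist_half_sum_squares_le:
  fixes h x y :: "'a::real_normed_algebra"
  assumes "norm x \<le> 1/2" "norm y \<le> 1/2"
  shows "dist ((1/2::real) *\<^sub>R (h * h + x * x)) ((1/2::real) *\<^sub>R (h * h + y * y)) \<le> 1/2 * dist x y"
proof -
  have "(1/2::real) *\<^sub>R (h * h + x * x) - (1/2::real) *\<^sub>R (h * h + y * y)
      = (1/2::real) *\<^sub>R (x * (x - y) + (x - y) * y)"
    by (simp add: algebra_simps)
  then have "dist ((1/2::real) *\<^sub>R (h * h + x * x)) ((1/2::real) *\<^sub>R (h * h + y * y))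
      \<le> 1/2 * (norm x * norm (x - y) + norm (x - y) * norm y)"
    using norm_triangle_ineq[of "x * (x - y)" "(x - y) * y"] norm_mult_ineq[of x "x - y"]
      norm_mult_ineq[of "x - y" y] by (simp add: dist_norm)
  also have "\<dots> \<le> 1/2 * (1/2 * norm (x - y) + norm (x - y) * (1/2))"
    using mult_right_mono[OF assms(1), of "norm (x - y)"] mult_left_mono[OF assms(2), of "norm (x - y)"]
    by simp
  finally show ?thesis
    by (simp add: dist_norm)
qed

lemma exists_sqrt_complement:
  fixes h :: "'a::cstar_algebra"
  assumes "cstar h = h" "norm h \<le> 1/2"
  obtains k where "cstar k = k" "k * h = h * k" "k + k = h * h + k * k"
proof -
  define S where "S = {k::'a. norm k \<le> 1/2 \<and> cstar k = k \<and> k * h = h * k}"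
  define f where "f k = (1/2::real) *\<^sub>R (h * h + k * k)" for k
  have "continuous_on UNIV (cstar :: 'a \<Rightarrow> 'a)"
    using bounded_linear_cstar linear_continuous_on by blast
  then have "closed S"
    unfolding S_def by (intro closed_Collect_conj closed_Collect_le closed_Collect_eq)
      (auto intro!: continuous_intros)
  have "f ` S \<subseteq> S"
  proof
    fix y
    assume "y \<in> f ` S"
    then obtain k where k: "norm k \<le> 1/2" "cstar k = k" "k * h = h * k" "y = f k"
      unfolding S_def by auto
    have "k * k * h = h * (k * k)"
      using k(3) by (metis mult.assoc)
    then have "(h * h + k * k) * h = h * (h * h + k * k)"
      by (simp add: distrib_left distrib_right mult.assoc)
    then show "y \<in> S"
      using k assms norm_half_sum_squares_le[of h k]
      by (simp add: S_def f_def cstar_scaleR cstar_add cstar_mult)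
  qed
  moreover have "0 \<in> S"
    by (simp add: S_def)
  moreover have "dist (f x) (f y) \<le> 1/2 * dist x y" if "x \<in> S" "y \<in> S" for x y
    using that dist_half_sum_squares_le[of x y h] by (simp add: S_def f_def)
  ultimately obtain k where "k \<in> S" "f k = k"
    using Banach_fix[of S "1/2" f] \<open>closed S\<close> by (auto simp: complete_eq_closed)
  moreover have "k + k = h * h + k * k"
  proof -
    have "k + k = 2 *\<^sub>R f k"
      using \<open>f k = k\<close> by (simp add: scaleR_2)
    then show ?thesis
      by (simp add: f_def)
  qed
  ultimately show ?thesis
    using that unfolding S_def by blast
qed

lemma star_hom_norm_le_two:
  fixes f :: "'a::cstar_algebra \<Rightarrow> 'a"
  assumes f: "star_hom f" and "cstar h = h" "norm h \<le> 1/2"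
  shows "norm (f h) \<le> 2"
proof -
  obtain k where k: "cstar k = k" "k * h = h * k" "k + k = h * h + k * k"
    using exists_sqrt_complement[OF assms(2,3)] .
  define s m where "s = f h" and "m = f k"
  have s: "cstar s = s" and m: "cstar m = m" and "s * m = m * s"
    using f assms(2) k unfolding s_def m_def star_hom_def by metis+
  have twice_m: "s * s + m * m = 2 *\<^sub>R m"
    using f k(3) unfolding s_def m_def star_hom_def by (metis scaleR_2)
  have "norm m ^ 2 \<le> 2 * norm m"
    using norm_power2_le_norm_sum_squares[OF m s \<open>s * m = m * s\<close>[symmetric]] twice_m
    by (simp add: add.commute)
  then have "norm m \<le> 2"
    by (cases "norm m = 0") (auto simp: power2_eq_square)
  moreover have "norm s ^ 2 \<le> 2 * norm m"
    using norm_power2_le_norm_sum_squares[OF s m \<open>s * m = m * s\<close>] twice_m by simp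
  ultimately have "norm s ^ 2 \<le> 2 ^ 2"
    by simp
  then show ?thesis
    unfolding s_def by (rule power2_le_imp_le) simp
qed

lemma star_hom_norm_selfadjoint_le:
  fixes f :: "'a::cstar_algebra \<Rightarrow> 'a"
  assumes f: "star_hom f" and "cstar h = h"
  shows "norm (f h) \<le> 4 * norm h"
proof (cases "h = 0")
  case True
  then show ?thesis
    using star_hom_zero[OF f] by simp
next
  case False
  define r where "r = 1 / (2 * norm h)"
  have "r > 0"
    using False by (simp add: r_def)
  have "norm (f (r *\<^sub>R h)) \<le> 2"
    using False by (intro star_hom_norm_le_two[OF f]) (simp_all add: cstar_scaleR assms(2) r_def)
  then have "r * norm (f h) \<le> 2"
    using \<open>r > 0\<close> by (simp add: star_hom_scaleR[OF f])
  then show ?thesis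
    using False by (simp add: r_def field_simps)
qed

text \<open>A sharper argument gives \<open>\<parallel>f a\<parallel> \<le> \<parallel>a\<parallel>\<close>; any uniform constant suffices here.\<close>

lemma star_hom_norm_le:
  fixes f :: "'a::cstar_algebra \<Rightarrow> 'a"
  assumes f: "star_hom f"
  shows "norm (f a) \<le> 2 * norm a"
proof -
  have "norm (f a) ^ 2 = norm (f (cstar a * a))"
    using f by (simp add: cstar_identity star_hom_def)
  also have "\<dots> \<le> 4 * norm (cstar a * a)"
    by (rule star_hom_norm_selfadjoint_le[OF f]) (simp add: cstar_mult cstar_cstar)
  also have "\<dots> = (2 * norm a) ^ 2"
    by (simp add: cstar_identity power_mult_distrib)
  finally show ?thesis
    by (rule power2_le_imp_le) simp
qed

lemma compact_superset_imp_totally_bounded: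
  fixes S :: "'a::metric_space set"
  assumes "compact C" "S \<subseteq> C"
  shows "totally_bounded S"
  unfolding totally_bounded_metric
proof (intro allI impI)
  fix e :: real
  assume "e > 0"
  then obtain k where "finite k" "C \<subseteq> (\<Union>x\<in>k. ball x e)"
    using assms(1) unfolding compact_eq_totally_bounded by blast
  then show "\<exists>k. finite k \<and> S \<subseteq> (\<Union>x\<in>k. {y. dist x y < e})"
    using assms(2) by (auto simp: ball_def)
qed

lemma totally_bounded_imp_compact_closure:
  fixes S :: "'a::complete_space set"
  assumes "totally_bounded S"
  shows "compact (closure S)"
  unfolding compact_eq_totally_bounded
proof (intro conjI allI impI)
  show "complete (closure S)"
    by (simp add: complete_eq_closed)
  fix e :: real
  assume "e > 0"
  then obtain k where k: "finite k" "S \<subseteq> (\<Union>x\<in>k. {y. dist x y < e/2})"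
    using assms unfolding totally_bounded_metric by (meson half_gt_zero)
  have "S \<subseteq> (\<Union>x\<in>k. cball x (e/2))"
    using k(2) by (force simp: mem_cball)
  moreover have "closed (\<Union>x\<in>k. cball x (e/2))"
    using k(1) by (intro closed_UN) auto
  ultimately have "closure S \<subseteq> (\<Union>x\<in>k. cball x (e/2))"
    by (rule closure_minimal)
  also have "\<dots> \<subseteq> (\<Union>x\<in>k. ball x e)"
    using \<open>e > 0\<close> by (force simp: mem_cball mem_ball)
  finally show "\<exists>k. finite k \<and> closure S \<subseteq> (\<Union>x\<in>k. ball x e)"
    using k(1) by blast
qed

lemma totally_bounded_continuous_image:
  fixes S :: "'a::complete_space set" and f :: "'a \<Rightarrow> 'b::metric_space"
  assumes "totally_bounded S" "continuous_on UNIV f"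
  shows "totally_bounded (f ` S)"
proof (rule compact_superset_imp_totally_bounded)
  show "compact (f ` closure S)"
    using assms by (intro compact_continuous_image totally_bounded_imp_compact_closure)
      (auto intro: continuous_on_subset)
  show "f ` S \<subseteq> f ` closure S"
    using closure_subset by blast
qed

lemma totally_bounded_continuous_image_Times:
  fixes S T :: "'a::complete_space set" and f :: "'a \<times> 'a \<Rightarrow> 'b::metric_space"
  assumes "totally_bounded S" "totally_bounded T" "continuous_on UNIV f"
  shows "totally_bounded (f ` (S \<times> T))"
proof (rule compact_superset_imp_totally_bounded)
  show "compact (f ` (closure S \<times> closure T))"
    using assms by (intro compact_continuous_image compact_Times totally_bounded_imp_compact_closure)
      (auto intro: continuous_on_subset)
  show "f ` (S \<times> T) \<subseteq> f ` (closure S \<times> closure T)"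
    using closure_subset by blast
qed

lemma totally_bounded_orbit_closure:
  fixes f :: "'k \<Rightarrow> 'a::metric_space \<Rightarrow> 'b::metric_space"
  assumes lipschitz: "\<And>g x y. g \<in> K \<Longrightarrow> dist (f g x) (f g y) \<le> C * dist x y"
    and dense: "a \<in> closure D"
    and orbits: "\<And>b. b \<in> D \<Longrightarrow> totally_bounded ((\<lambda>g. f g b) ` K)"
  shows "totally_bounded ((\<lambda>g. f g a) ` K)"
  unfolding totally_bounded_metric
proof (intro allI impI)
  fix e :: real
  assume "e > 0"
  define C' where "C' = max C 1"
  have "C' > 0" "C \<le> C'"
    by (simp_all add: C'_def)
  obtain b where b: "b \<in> D" "dist b a < e / (2 * C')"
    using dense \<open>e > 0\<close> \<open>C' > 0\<close> unfolding closure_approachable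
    by (meson divide_pos_pos mult_pos_pos zero_less_numeral)
  obtain k where k: "finite k" "(\<lambda>g. f g b) ` K \<subseteq> (\<Union>x\<in>k. {y. dist x y < e/2})"
    using orbits[OF b(1)] \<open>e > 0\<close> unfolding totally_bounded_metric by (meson half_gt_zero)
  have "f g a \<in> (\<Union>x\<in>k. {y. dist x y < e})" if "g \<in> K" for g
  proof -
    obtain x where x: "x \<in> k" "dist x (f g b) < e/2"
      using k(2) \<open>g \<in> K\<close> by blast
    have "dist (f g b) (f g a) \<le> C' * dist b a"
      using lipschitz[OF \<open>g \<in> K\<close>] \<open>C \<le> C'\<close> by (meson order_trans mult_right_mono zero_le_dist)
    also have "\<dots> < e/2"
      using b(2) \<open>C' > 0\<close> by (simp add: field_simps)
    finally have "dist x (f g a) < e"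
      using x(2) dist_triangle[of x "f g a" "f g b"] by linarith
    then show ?thesis
      using x(1) by blast
  qed
  then show "\<exists>k. finite k \<and> (\<lambda>g. f g a) ` K \<subseteq> (\<Union>x\<in>k. {y. dist x y < e})"
    using k(1) by blast
qed

context
  fixes \<tau> :: "'k \<Rightarrow> 'a::cstar_algebra \<Rightarrow> 'a" and K :: "'k set"
  assumes star_hom: "\<And>g. g \<in> K \<Longrightarrow> star_hom (\<tau> g)"
begin

lemma totally_bounded_orbit_zero: "totally_bounded ((\<lambda>g. \<tau> g 0) ` K)"
  using star_hom star_hom_zero
  by (intro compact_superset_imp_totally_bounded[of "{0}"]) auto

lemma totally_bounded_orbit_add:
  assumes "totally_bounded ((\<lambda>g. \<tau> g x) ` K)" "totally_bounded ((\<lambda>g. \<tau> g y) ` K)"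
  shows "totally_bounded ((\<lambda>g. \<tau> g (x + y)) ` K)"
proof (rule totally_bounded_subset)
  show "totally_bounded ((\<lambda>(u, v). u + v) ` ((\<lambda>g. \<tau> g x) ` K \<times> (\<lambda>g. \<tau> g y) ` K))"
    using assms by (rule totally_bounded_continuous_image_Times) (simp add: case_prod_unfold continuous_intros)
  show "(\<lambda>g. \<tau> g (x + y)) ` K \<subseteq> (\<lambda>(u, v). u + v) ` ((\<lambda>g. \<tau> g x) ` K \<times> (\<lambda>g. \<tau> g y) ` K)"
    using star_hom unfolding star_hom_def by (auto intro!: image_eqI)
qed

lemma totally_bounded_orbit_mult:
  assumes "totally_bounded ((\<lambda>g. \<tau> g x) ` K)" "totally_bounded ((\<lambda>g. \<tau> g y) ` K)"
  shows "totally_bounded ((\<lambda>g. \<tau> g (x * y)) ` K)"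
proof (rule totally_bounded_subset)
  show "totally_bounded ((\<lambda>(u, v). u * v) ` ((\<lambda>g. \<tau> g x) ` K \<times> (\<lambda>g. \<tau> g y) ` K))"
    using assms by (rule totally_bounded_continuous_image_Times) (simp add: case_prod_unfold continuous_intros)
  show "(\<lambda>g. \<tau> g (x * y)) ` K \<subseteq> (\<lambda>(u, v). u * v) ` ((\<lambda>g. \<tau> g x) ` K \<times> (\<lambda>g. \<tau> g y) ` K)"
    using star_hom unfolding star_hom_def by (auto intro!: image_eqI)
qed

lemma totally_bounded_orbit_scaleC:
  assumes "totally_bounded ((\<lambda>g. \<tau> g x) ` K)"
  shows "totally_bounded ((\<lambda>g. \<tau> g (scaleC c x)) ` K)"
proof (rule totally_bounded_subset)
  show "totally_bounded (scaleC c ` (\<lambda>g. \<tau> g x) ` K)"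
    using assms linear_continuous_on[OF bounded_linear_scaleC] by (rule totally_bounded_continuous_image)
  show "(\<lambda>g. \<tau> g (scaleC c x)) ` K \<subseteq> scaleC c ` (\<lambda>g. \<tau> g x) ` K"
    using star_hom unfolding star_hom_def by auto
qed

lemma totally_bounded_orbit_cstar:
  assumes "totally_bounded ((\<lambda>g. \<tau> g x) ` K)"
  shows "totally_bounded ((\<lambda>g. \<tau> g (cstar x)) ` K)"
proof (rule totally_bounded_subset)
  show "totally_bounded (cstar ` (\<lambda>g. \<tau> g x) ` K)"
    using assms linear_continuous_on[OF bounded_linear_cstar] by (rule totally_bounded_continuous_image)
  show "(\<lambda>g. \<tau> g (cstar x)) ` K \<subseteq> cstar ` (\<lambda>g. \<tau> g x) ` K"
    using star_hom unfolding star_hom_def by auto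
qed

lemma totally_bounded_orbit_monomials:
  assumes V: "\<And>a. a \<in> V \<Longrightarrow> totally_bounded ((\<lambda>g. \<tau> g a) ` K)"
    and "m \<in> monomials V"
  shows "totally_bounded ((\<lambda>g. \<tau> g m) ` K)"
proof -
  have generators: "totally_bounded ((\<lambda>g. \<tau> g a) ` K)" if "a \<in> V \<union> cstar ` V" for a
    using that V totally_bounded_orbit_cstar by blast
  have "totally_bounded ((\<lambda>g. \<tau> g (nlprod xs)) ` K)"
    if "xs \<noteq> []" "set xs \<subseteq> V \<union> cstar ` V" for xs
    using that by (induction xs rule: nlprod.induct) (auto intro: generators totally_bounded_orbit_mult)
  then show ?thesis
    using assms(2) unfolding monomials_def by blast
qed

lemma totally_bounded_orbit_pset:
  assumes V: "\<And>a. a \<in> V \<Longrightarrow> totally_bounded ((\<lambda>g. \<tau> g a) ` K)"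
    and "a \<in> pset V"
  shows "totally_bounded ((\<lambda>g. \<tau> g a) ` K)"
proof -
  obtain F c where F: "finite F" "F \<subseteq> monomials V" and a: "a = (\<Sum>m\<in>F. scaleC (c m) m)"
    using assms(2) unfolding pset_def by blast
  have "totally_bounded ((\<lambda>g. \<tau> g (\<Sum>m\<in>F. scaleC (c m) m)) ` K)"
    using F by (induction F rule: finite_induct)
      (auto intro: totally_bounded_orbit_zero totally_bounded_orbit_add totally_bounded_orbit_scaleC
        totally_bounded_orbit_monomials[OF V])
  then show ?thesis
    unfolding a .
qed

end

theorem proposition5p3:
  fixes \<tau> :: "'k \<Rightarrow> 'a::cstar_algebra \<Rightarrow> 'a"
    and K :: "'k set"
    and V :: "'a set"
  assumes "\<forall>g\<in>K. star_hom (\<tau> g)"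
    and "closure (pset V) = UNIV"
    and "\<forall>g\<in>K. \<tau> g ` V \<subseteq> pset V"
    and "\<forall>a\<in>V. totally_bounded ((\<lambda>g. \<tau> g a) ` K)"
  shows "\<forall>a. totally_bounded ((\<lambda>g. \<tau> g a) ` K)"
proof
  fix a :: 'a
  have lipschitz: "dist (\<tau> g x) (\<tau> g y) \<le> 2 * dist x y" if "g \<in> K" for g x y
    using assms(1) that by (simp add: dist_norm star_hom_norm_le flip: star_hom_diff)
  have orbits: "totally_bounded ((\<lambda>g. \<tau> g b) ` K)" if "b \<in> pset V" for b
    using totally_bounded_orbit_pset[of K \<tau> V b] assms(1,4) that by blast
  have "a \<in> closure (pset V)"
    using assms(2) by simp
  then show "totally_bounded ((\<lambda>g. \<tau> g a) ` K)"
    using totally_bounded_orbit_closure[of K \<tau> 2] lipschitz orbits by blast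
qed

end
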